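(* Let $k\in\mathbb{N}_0\cup\{\infty\}$, let $E,F$ be locally convex super vector spaces, $\mathcal{U}\subseteq\overline{E}^{(k)}$ an open subfunctor and $f\colon\mathcal{U}\to\overline{F}^{(k)}$ a natural transformation such that every $f_\Lambda$ is smooth. Let $\Lambda=\Lambda_n\in\mathbf{Gr}^{(k)}$ and $1\le p\le n$. Let $x\in\mathcal{U}_\Lambda$ be such that no component of $x$ involves $\lambda_p$, i.e. $x\in\overline{E}^{(k)}_{\Delta_p}$ where $\Delta_p$ is the span of all $\lambda_I$ with $p\notin I$, and let $y\in\overline{E}^{(k)}_{\lambda_p\Lambda}$. Then $x+y\in\mathcal{U}_\Lambda$ and $$f_\Lambda(x+y)=f_\Lambda(x)+df_\Lambda(x)(y).$$
   Context: Grassmann algebras $\Lambda_n=\mathbb{R}[\lambda_1,\dots,\lambda_n]$ (anticommuting generators, basis $\lambda_I$, grading by parity of $|I|$), category $\mathbf{Gr}^{(k)}$ of $\Lambda_0,\dots,\Lambda_k$ with parity-preserving unital algebra homomorphisms. For a locally convex super vector space $E=E_0\oplus E_1$: $\overline{E}^{(k)}_\Lambda=(E_0\otimes\Lambda_{\bar 0})\oplus(E_1\otimes\Lambda_{\bar1})$, functorial via $\mathrm{id}\otimes\varrho$; for a linear subspace $\Delta\subseteq\Lambda$, $\overline{E}^{(k)}_\Delta:=(E_0\otimes(\Delta\cap\Lambda_{\bar0}))\oplus(E_1\otimes(\Delta\cap\Lambda_{\bar1}))$. An open subfunctor $\mathcal{U}\subseteq\overline{E}^{(k)}$: open sets $\mathcal{U}_\Lambda$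 stable under all $\overline{E}^{(k)}_\varrho$. Smoothness is Bastiani smoothness. *)

theory Defs
  imports "HOL-Analysis.Analysis" "HOL-Library.Extended_Nat"
begin

instantiation "fun" :: (type, zero) zero
begin
definition zero_fun_def: "(0 :: 'a \<Rightarrow> 'b) = (\<lambda>x. 0)"
instance ..
end

instantiation "fun" :: (type, plus) plus
begin
definition plus_fun_def: "f + g = (\<lambda>x. f x + g x)"
instance ..
end

instantiation "fun" :: (type, real_vector) real_vector
begin
definition scaleR_fun_def: "scaleR c f = (\<lambda>x. scaleR c (f x))"
instance
  by standard (auto simp: plus_fun_def zero_fun_def scaleR_fun_def fun_eq_iff
      algebra_simps scaleR_add_right scaleR_add_left)
end

definition locally_convex :: "'a::{real_vector,t2_space} itself \<Rightarrow> bool" where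
  "locally_convex (T :: 'a itself) \<longleftrightarrow>
     continuous_on UNIV (\<lambda>p::'a \<times> 'a. fst p + snd p) \<and>
     continuous_on UNIV (\<lambda>p::real \<times> 'a. fst p *\<^sub>R snd p) \<and>
     (\<forall>U::'a set. open U \<and> 0 \<in> U \<longrightarrow> (\<exists>V. open V \<and> convex V \<and> 0 \<in> V \<and> V \<subseteq> U))"

text \<open>An element of a Grassmann algebra is given by its coefficient family
  a :: nat set => real w.r.t. the basis lambda_I (I a finite set of generator indices).\<close>

definition gr_alg :: "nat \<Rightarrow> (nat set \<Rightarrow> real) set" where
  "gr_alg n = {a. \<forall>I. a I \<noteq> 0 \<longrightarrow> I \<subseteq> {1..n}}"

definition gr_basis :: "nat set \<Rightarrow> (nat set \<Rightarrow> real)" where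
  "gr_basis I = (\<lambda>J. if J = I then 1 else 0)"

text \<open>lambda_I lambda_J = gr_sign I J lambda_(I union J) for disjoint I, J\<close>
definition gr_sign :: "nat set \<Rightarrow> nat set \<Rightarrow> real" where
  "gr_sign I J = (-1) ^ card {(i, j). i \<in> I \<and> j \<in> J \<and> j < i}"

definition gr_mult :: "(nat set \<Rightarrow> real) \<Rightarrow> (nat set \<Rightarrow> real) \<Rightarrow> (nat set \<Rightarrow> real)" where
  "gr_mult a b = (\<lambda>K. \<Sum>I\<in>Pow K. a I * b (K - I) * gr_sign I (K - I))"

definition gr_even :: "(nat set \<Rightarrow> real) \<Rightarrow> bool" where
  "gr_even a \<longleftrightarrow> (\<forall>I. a I \<noteq> 0 \<longrightarrow> even (card I))"

definition gr_odd :: "(nat set \<Rightarrow> real) \<Rightarrow> bool" where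
  "gr_odd a \<longleftrightarrow> (\<forall>I. a I \<noteq> 0 \<longrightarrow> odd (card I))"

definition gr_morph :: "nat \<Rightarrow> nat \<Rightarrow> ((nat set \<Rightarrow> real) \<Rightarrow> (nat set \<Rightarrow> real)) \<Rightarrow> bool" where
  "gr_morph m n \<rho> \<longleftrightarrow>
     (\<forall>a\<in>gr_alg m. \<rho> a \<in> gr_alg n) \<and>
     (\<forall>a\<in>gr_alg m. \<forall>b\<in>gr_alg m. \<rho> (a + b) = \<rho> a + \<rho> b) \<and>
     (\<forall>a\<in>gr_alg m. \<forall>c::real. \<rho> (c *\<^sub>R a) = c *\<^sub>R \<rho> a) \<and>
     (\<forall>a\<in>gr_alg m. \<forall>b\<in>gr_alg m. \<rho> (gr_mult a b) = gr_mult (\<rho> a) (\<rho> b)) \<and>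
     \<rho> (gr_basis {}) = gr_basis {} \<and>
     (\<forall>a\<in>gr_alg m. gr_even a \<longrightarrow> gr_even (\<rho> a)) \<and>
     (\<forall>a\<in>gr_alg m. gr_odd a \<longrightarrow> gr_odd (\<rho> a))"

text \<open>A super vector space E = E_0 + E_1 is given by two types 'e0, 'e1.
  An element of (E_0 tensor Lambda_even) + (E_1 tensor Lambda_odd) is given by its
  coefficient families (x0, x1) w.r.t. the basis lambda_I.\<close>

type_synonym ('e0, 'e1) sbar = "(nat set \<Rightarrow> 'e0) \<times> (nat set \<Rightarrow> 'e1)"

definition ebar :: "nat \<Rightarrow> ('e0::real_vector, 'e1::real_vector) sbar set" where
  "ebar n = {(x0, x1). \<forall>I. (x0 I \<noteq> 0 \<longrightarrow> I \<subseteq> {1..n} \<and> even (card I)) \<and>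
                            (x1 I \<noteq> 0 \<longrightarrow> I \<subseteq> {1..n} \<and> odd (card I))}"

text \<open>bar E_Delta for a linear subspace Delta of Lambda: the image of
  (E_0 tensor (Delta cap Lambda_even)) + (E_1 tensor (Delta cap Lambda_odd)).\<close>
definition ebar_sub :: "(nat set \<Rightarrow> real) set \<Rightarrow> ('e0::real_vector, 'e1::real_vector) sbar set" where
  "ebar_sub \<Delta> = {(x0, x1).
     (\<exists>(N::nat) d e. (\<forall>i<N. d i \<in> \<Delta> \<and> gr_even (d i)) \<and> x0 = (\<lambda>J. \<Sum>i<N. d i J *\<^sub>R e i)) \<and>
     (\<exists>(N::nat) d e. (\<forall>i<N. d i \<in> \<Delta> \<and> gr_odd (d i)) \<and> x1 = (\<lambda>J. \<Sum>i<N. d i J *\<^sub>R e i))}"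

text \<open>bar E_rho = id tensor rho, for rho : Lambda_m -> Lambda_n.\<close>
definition ebar_map :: "nat \<Rightarrow> ((nat set \<Rightarrow> real) \<Rightarrow> (nat set \<Rightarrow> real)) \<Rightarrow>
    ('e0::real_vector, 'e1::real_vector) sbar \<Rightarrow> ('e0, 'e1) sbar" where
  "ebar_map m \<rho> x = ((\<lambda>J. \<Sum>I\<in>Pow {1..m}. \<rho> (gr_basis I) J *\<^sub>R fst x I),
                      (\<lambda>J. \<Sum>I\<in>Pow {1..m}. \<rho> (gr_basis I) J *\<^sub>R snd x I))"

definition open_subfunctor ::
    "enat \<Rightarrow> (nat \<Rightarrow> ('e0::{real_vector,topological_space}, 'e1::{real_vector,topological_space}) sbar set) \<Rightarrow> bool" where
  "open_subfunctor k U \<longleftrightarrow>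
     (\<forall>n. enat n \<le> k \<longrightarrow> U n \<subseteq> ebar n \<and> openin (top_of_set (ebar n)) (U n)) \<and>
     (\<forall>m n \<rho>. enat m \<le> k \<longrightarrow> enat n \<le> k \<longrightarrow> gr_morph m n \<rho> \<longrightarrow> ebar_map m \<rho> ` U m \<subseteq> U n)"

definition natural_transf ::
    "enat \<Rightarrow> (nat \<Rightarrow> ('e0::real_vector, 'e1::real_vector) sbar set) \<Rightarrow>
     (nat \<Rightarrow> ('e0, 'e1) sbar \<Rightarrow> ('f0::real_vector, 'f1::real_vector) sbar) \<Rightarrow> bool" where
  "natural_transf k U f \<longleftrightarrow>
     (\<forall>n. enat n \<le> k \<longrightarrow> f n ` U n \<subseteq> ebar n) \<and>
     (\<forall>m n \<rho>. enat m \<le> k \<longrightarrow> enat n \<le> k \<longrightarrow> gr_morph m n \<rho> \<longrightarrow>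
        (\<forall>x\<in>U m. f n (ebar_map m \<rho> x) = ebar_map m \<rho> (f m x)))"

definition dir_deriv :: "('v::real_vector \<Rightarrow> 'w::{real_vector,topological_space}) \<Rightarrow> 'v \<Rightarrow> 'v \<Rightarrow> 'w" where
  "dir_deriv f x h = (THE L. ((\<lambda>t. (1 / t) *\<^sub>R (f (x + t *\<^sub>R h) - f x)) \<longlongrightarrow> L) (at (0::real)))"

fun iter_deriv :: "('v::real_vector \<Rightarrow> 'w::{real_vector,topological_space}) \<Rightarrow> nat \<Rightarrow> 'v \<Rightarrow> (nat \<Rightarrow> 'v) \<Rightarrow> 'w" where
  "iter_deriv f 0 x h = f x"
| "iter_deriv f (Suc j) x h = dir_deriv (\<lambda>z. iter_deriv f j z h) x (h j)"

definition dirs :: "'v::real_vector set \<Rightarrow> nat \<Rightarrow> (nat \<Rightarrow> 'v) set" where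
  "dirs V j = {h. (\<forall>i<j. h i \<in> V) \<and> (\<forall>i\<ge>j. h i = 0)}"

definition bastiani_smooth :: "'v::{real_vector,topological_space} set \<Rightarrow> 'v set \<Rightarrow>
    ('v \<Rightarrow> 'w::{real_vector,topological_space}) \<Rightarrow> bool" where
  "bastiani_smooth V U f \<longleftrightarrow> U \<subseteq> V \<and> openin (top_of_set V) U \<and>
     (\<forall>j. (\<forall>x\<in>U. \<forall>h\<in>dirs V (Suc j). \<exists>L.
             ((\<lambda>t. (1 / t) *\<^sub>R (iter_deriv f j (x + t *\<^sub>R h j) h - iter_deriv f j x h)) \<longlongrightarrow> L) (at (0::real))) \<and>
          continuous_on (U \<times> dirs V j) (\<lambda>(x, h). iter_deriv f j x h))"

definition delta_p :: "nat \<Rightarrow> nat \<Rightarrow> (nat set \<Rightarrow> real) set" where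
  "delta_p n p = {a \<in> gr_alg n. \<forall>I. p \<in> I \<longrightarrow> a I = 0}"

definition gen_ideal :: "nat \<Rightarrow> nat \<Rightarrow> (nat set \<Rightarrow> real) set" where
  "gen_ideal n p = {gr_mult (gr_basis {p}) a | a. a \<in> gr_alg n}"

end

theory Submission
  imports Defs
begin

text \<open>Rescaling the generator \<open>\<lambda>\<^sub>p \<mapsto> t \<lambda>\<^sub>p\<close> is a morphism
  \<open>\<Lambda> \<rightarrow> \<Lambda>\<close>, and on \<open>\<Lambda>\<^sub>n\<close>-points it moves \<open>x + s y\<close> to \<open>x + t s y\<close>, because \<open>x\<close> does not
  involve \<open>\<lambda>\<^sub>p\<close> while every component of \<open>y\<close> does. Since \<open>U\<^sub>\<Lambda>\<close> is open and stable
  under these morphisms, it contains \<open>x + s y\<close> for some small \<open>s \<noteq> 0\<close> and hence \<open>x + y\<close>.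
  Naturality of \<open>f\<close> then shows that \<open>t \<mapsto> f\<^sub>\<Lambda>(x + t y)\<close> is the rescaling of \<open>f\<^sub>\<Lambda>(x + y)\<close>,
  which is affine in \<open>t\<close>; so the difference quotients are constant and the directional
  derivative is the slope.\<close>

text \<open>The product topology on function spaces has no \<open>t2_space\<close> instance (it would clash with
  the metric instance for countable index types), so uniqueness of limits is shown coordinatewise.\<close>

lemma tendsto_fun_unique:
  fixes g :: "'a \<Rightarrow> ('i \<Rightarrow> 'b::t2_space)"
  assumes "(g \<longlongrightarrow> L1) F" "(g \<longlongrightarrow> L2) F" "F \<noteq> bot"
  shows "L1 = L2"
proof
  fix i
  have proj: "continuous_on UNIV (\<lambda>h::'i \<Rightarrow> 'b. h i)" by simp
  have "((\<lambda>t. g t i) \<longlongrightarrow> L1 i) F" "((\<lambda>t. g t i) \<longlongrightarrow> L2 i) F"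
    using continuous_on_tendsto_compose[OF proj assms(1)]
      continuous_on_tendsto_compose[OF proj assms(2)] by simp_all
  then show "L1 i = L2 i" using tendsto_unique assms(3) by blast
qed

lemma tendsto_sbar_unique:
  fixes g :: "'a \<Rightarrow> ('i \<Rightarrow> 'b::t2_space) \<times> ('j \<Rightarrow> 'c::t2_space)"
  assumes "(g \<longlongrightarrow> L1) F" "(g \<longlongrightarrow> L2) F" "F \<noteq> bot"
  shows "L1 = L2"
proof (rule prod_eqI)
  show "fst L1 = fst L2"
    by (rule tendsto_fun_unique[OF tendsto_fst[OF assms(1)] tendsto_fst[OF assms(2)] assms(3)])
  show "snd L1 = snd L2"
    by (rule tendsto_fun_unique[OF tendsto_snd[OF assms(1)] tendsto_snd[OF assms(2)] assms(3)])
qed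

lemma dir_deriv_affine_line:
  fixes g :: "'v::real_vector \<Rightarrow> ('i \<Rightarrow> 'b::{real_vector,t2_space}) \<times> ('j \<Rightarrow> 'c::{real_vector,t2_space})"
  assumes affine: "\<And>t. g (x + t *\<^sub>R y) = a + t *\<^sub>R b"
  shows "dir_deriv g x y = b"
proof -
  have "\<forall>t. t \<noteq> 0 \<longrightarrow> (1 / t) *\<^sub>R (g (x + t *\<^sub>R y) - g x) = b"
    using affine[of 0] by (simp add: affine)
  then have lim: "((\<lambda>t. (1 / t) *\<^sub>R (g (x + t *\<^sub>R y) - g x)) \<longlongrightarrow> b) (at (0::real))"
    by (intro tendsto_eventually) (simp add: eventually_at_filter)
  show ?thesis
    unfolding dir_deriv_def
  proof (rule the_equality)
    fix L
    assume "((\<lambda>t. (1 / t) *\<^sub>R (g (x + t *\<^sub>R y) - g x)) \<longlongrightarrow> L) (at (0::real))"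
    then show "L = b" using tendsto_sbar_unique[OF _ lim] by simp
  qed (rule lim)
qed

lemma continuous_on_line:
  assumes "locally_convex TYPE('a::{real_vector,t2_space})"
  shows "continuous_on UNIV (\<lambda>t::real. a + t *\<^sub>R (b::'a))"
proof -
  have add: "continuous_on UNIV (\<lambda>p::'a \<times> 'a. fst p + snd p)"
   and scale: "continuous_on UNIV (\<lambda>p::real \<times> 'a. fst p *\<^sub>R snd p)"
    using assms unfolding locally_convex_def by auto
  have "continuous_on UNIV (\<lambda>t::real. (t, b))"
    by (intro continuous_intros)
  then have "continuous_on UNIV (\<lambda>t::real. t *\<^sub>R b)"
    using continuous_on_compose2[OF scale] by fastforce
  then have "continuous_on UNIV (\<lambda>t::real. (a, t *\<^sub>R b))"
    by (intro continuous_intros)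
  then show ?thesis
    using continuous_on_compose2[OF add] by fastforce
qed

lemma continuous_on_line_fun:
  assumes "locally_convex TYPE('a::{real_vector,t2_space})"
  shows "continuous_on UNIV (\<lambda>t::real. g + t *\<^sub>R (h::'i \<Rightarrow> 'a))"
  using continuous_on_line[OF assms]
  by (intro continuous_on_coordinatewise_then_product) (simp add: plus_fun_def scaleR_fun_def)

lemma continuous_on_line_sbar:
  assumes "locally_convex TYPE('a::{real_vector,t2_space})"
    and "locally_convex TYPE('b::{real_vector,t2_space})"
  shows "continuous_on UNIV (\<lambda>t::real. x + t *\<^sub>R (y :: ('i \<Rightarrow> 'a) \<times> ('j \<Rightarrow> 'b)))"
proof -
  have line: "(\<lambda>t. x + t *\<^sub>R y) = (\<lambda>t. (fst x + t *\<^sub>R fst y, snd x + t *\<^sub>R snd y))"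
    by (rule ext) (simp add: prod_eq_iff)
  show ?thesis
    unfolding line by (intro continuous_on_Pair continuous_on_line_fun assms)
qed

lemma dilation_invariant_open_line:
  fixes X :: "real \<Rightarrow> 'a::topological_space"
  assumes "continuous_on UNIV X" "range X \<subseteq> S" "openin (top_of_set S) U"
    and invariant: "\<And>s t. X s \<in> U \<Longrightarrow> X (t * s) \<in> U" and "X 0 \<in> U"
  shows "X 1 \<in> U"
proof -
  have "openin (top_of_set UNIV) (UNIV \<inter> X -` U)"
    using continuous_openin_preimage[OF assms(1) _ assms(3)] assms(2) by blast
  then have "open (X -` U)" by simp
  then obtain e where e: "e > 0" "ball 0 e \<subseteq> X -` U"
    using assms(5) open_contains_ball_eq by blast
  then have "X (e / 2) \<in> U" by (simp add: subset_iff)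
  moreover have "(1 / (e / 2)) * (e / 2) = 1" using e(1) by simp
  ultimately show ?thesis using invariant by metis
qed

definition gen_scale :: "nat \<Rightarrow> real \<Rightarrow> (nat set \<Rightarrow> 'a::real_vector) \<Rightarrow> (nat set \<Rightarrow> 'a)" where
  "gen_scale p t g = (\<lambda>I. if p \<in> I then t *\<^sub>R g I else g I)"

definition sbar_scale :: "nat \<Rightarrow> real \<Rightarrow> ('e0::real_vector, 'e1::real_vector) sbar \<Rightarrow> ('e0, 'e1) sbar" where
  "sbar_scale p t = map_prod (gen_scale p t) (gen_scale p t)"

lemma gen_scale_gr_mult: "gen_scale p t (gr_mult a b) = gr_mult (gen_scale p t a) (gen_scale p t b)"
proof
  fix K
  have "gr_mult (gen_scale p t a) (gen_scale p t b) K
      = (\<Sum>I\<in>Pow K. (if p \<in> K then t else 1) * (a I * b (K - I) * gr_sign I (K - I)))"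
    unfolding gr_mult_def gen_scale_def by (rule sum.cong) auto
  then show "gen_scale p t (gr_mult a b) K = gr_mult (gen_scale p t a) (gen_scale p t b) K"
    unfolding gr_mult_def gen_scale_def by (simp add: sum_distrib_left)
qed

lemma gr_morph_gen_scale: "gr_morph n n (gen_scale p t)"
  unfolding gr_morph_def
  by (simp add: gen_scale_gr_mult)
    (auto simp: gen_scale_def gr_alg_def gr_basis_def gr_even_def gr_odd_def
      plus_fun_def scaleR_fun_def algebra_simps)

lemma gen_scale_eq_coeffs:
  assumes "\<forall>J. g J \<noteq> 0 \<longrightarrow> J \<subseteq> {1..n}"
  shows "(\<lambda>J. \<Sum>I\<in>Pow {1..n}. gen_scale p t (gr_basis I) J *\<^sub>R g I) = gen_scale p t g"
proof
  fix J
  have "(\<Sum>I\<in>Pow {1..n}. gen_scale p t (gr_basis I) J *\<^sub>R g I)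
      = (\<Sum>I\<in>Pow {1..n}. if I = J then gen_scale p t g J else 0)"
    by (rule sum.cong) (auto simp: gen_scale_def gr_basis_def)
  also have "\<dots> = gen_scale p t g J" using assms by (auto simp: gen_scale_def)
  finally show "(\<Sum>I\<in>Pow {1..n}. gen_scale p t (gr_basis I) J *\<^sub>R g I) = gen_scale p t g J" .
qed

lemma ebar_map_gen_scale:
  assumes "u \<in> ebar n"
  shows "ebar_map n (gen_scale p t) u = sbar_scale p t u"
proof -
  have supp: "\<forall>J. fst u J \<noteq> 0 \<longrightarrow> J \<subseteq> {1..n}" "\<forall>J. snd u J \<noteq> 0 \<longrightarrow> J \<subseteq> {1..n}"
    using assms by (auto simp: ebar_def split: prod.splits)
  show ?thesis
    unfolding ebar_map_def sbar_scale_def map_prod_def split_beta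
      gen_scale_eq_coeffs[OF supp(1)] gen_scale_eq_coeffs[OF supp(2)] ..
qed

lemma open_subfunctor_sbar_scale:
  assumes "open_subfunctor k U" "enat n \<le> k" "u \<in> U n"
  shows "sbar_scale p t u \<in> U n"
proof -
  have "U n \<subseteq> ebar n" "ebar_map n (gen_scale p t) ` U n \<subseteq> U n"
    using assms(1,2) gr_morph_gen_scale[of n p t] unfolding open_subfunctor_def by simp_all
  with assms(3) have "u \<in> ebar n" "ebar_map n (gen_scale p t) u \<in> U n" by auto
  then show ?thesis by (simp add: ebar_map_gen_scale)
qed

lemma natural_transf_sbar_scale:
  assumes "natural_transf k U f" "open_subfunctor k U" "enat n \<le> k" "u \<in> U n"
  shows "f n (sbar_scale p t u) = sbar_scale p t (f n u)"
proof -
  have "u \<in> ebar n" "f n u \<in> ebar n"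
    using assms unfolding open_subfunctor_def natural_transf_def by auto
  moreover have "f n (ebar_map n (gen_scale p t) u) = ebar_map n (gen_scale p t) (f n u)"
    using assms(1,3,4) gr_morph_gen_scale[of n p t] unfolding natural_transf_def by simp
  ultimately show ?thesis by (simp add: ebar_map_gen_scale)
qed

lemma sbar_scale_affine: "sbar_scale p t w = sbar_scale p 0 w + t *\<^sub>R (w - sbar_scale p 0 w)"
  by (cases w) (auto simp: sbar_scale_def gen_scale_def plus_fun_def scaleR_fun_def fun_eq_iff)

lemma sbar_scale_line:
  assumes "\<And>J. p \<in> J \<Longrightarrow> fst x J = 0 \<and> snd x J = 0"
    and "\<And>J. p \<notin> J \<Longrightarrow> fst y J = 0 \<and> snd y J = 0"
  shows "sbar_scale p t (x + s *\<^sub>R y) = x + (t * s) *\<^sub>R y"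
  using assms
  by (cases x, cases y) (auto simp: sbar_scale_def gen_scale_def plus_fun_def scaleR_fun_def fun_eq_iff)

lemma ebar_add_scaleR:
  assumes "u \<in> ebar n" "v \<in> ebar n"
  shows "u + s *\<^sub>R v \<in> ebar n"
  using assms unfolding ebar_def
  by (cases u, cases v) (simp add: plus_fun_def scaleR_fun_def, metis add.right_neutral scale_zero_right)

lemma sum_scaleR_coeff_nonzero:
  "(\<Sum>i<(N::nat). d i J *\<^sub>R (e i :: 'a::real_vector)) \<noteq> 0 \<Longrightarrow> \<exists>i<N. d i J \<noteq> 0"
  by (metis (mono_tags, lifting) lessThan_iff scale_zero_left sum.neutral)

lemma ebar_sub_coeff:
  assumes "x \<in> ebar_sub \<Delta>"
  shows "fst x J \<noteq> 0 \<Longrightarrow> \<exists>a\<in>\<Delta>. a J \<noteq> 0 \<and> even (card J)"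
    and "snd x J \<noteq> 0 \<Longrightarrow> \<exists>a\<in>\<Delta>. a J \<noteq> 0 \<and> odd (card J)"
proof -
  obtain x0 x1 where x: "x = (x0, x1)" by fastforce
  obtain N :: nat and d e where even: "\<forall>i<N. d i \<in> \<Delta> \<and> gr_even (d i)" "x0 = (\<lambda>J. \<Sum>i<N. d i J *\<^sub>R e i)"
    using assms unfolding x ebar_sub_def mem_Collect_eq prod.case by blast
  obtain N' :: nat and d' e' where odd: "\<forall>i<N'. d' i \<in> \<Delta> \<and> gr_odd (d' i)" "x1 = (\<lambda>J. \<Sum>i<N'. d' i J *\<^sub>R e' i)"
    using assms unfolding x ebar_sub_def mem_Collect_eq prod.case by blast
  show "fst x J \<noteq> 0 \<Longrightarrow> \<exists>a\<in>\<Delta>. a J \<noteq> 0 \<and> even (card J)"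
    using even sum_scaleR_coeff_nonzero[where N = N and d = d and e = e] unfolding x gr_even_def by simp blast
  show "snd x J \<noteq> 0 \<Longrightarrow> \<exists>a\<in>\<Delta>. a J \<noteq> 0 \<and> odd (card J)"
    using odd sum_scaleR_coeff_nonzero[where N = N' and d = d' and e = e'] unfolding x gr_odd_def by simp blast
qed

lemma ebar_sub_subset_ebar:
  assumes "\<Delta> \<subseteq> gr_alg n"
  shows "ebar_sub \<Delta> \<subseteq> ebar n"
proof
  fix x :: "('a, 'b) sbar"
  assume x: "x \<in> ebar_sub \<Delta>"
  have "fst x J \<noteq> 0 \<Longrightarrow> J \<subseteq> {1..n} \<and> even (card J)"
   and "snd x J \<noteq> 0 \<Longrightarrow> J \<subseteq> {1..n} \<and> odd (card J)" for J
    using ebar_sub_coeff[OF x, of J] assms unfolding gr_alg_def by blast+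
  then show "x \<in> ebar n"
    unfolding ebar_def by (cases x) auto
qed

lemma ebar_sub_delta_p_coeff:
  assumes "x \<in> ebar_sub (delta_p n p)" "p \<in> J"
  shows "fst x J = 0 \<and> snd x J = 0"
  using ebar_sub_coeff[OF assms(1), of J] assms(2) unfolding delta_p_def by blast

lemma gen_ideal_coeff:
  assumes "b \<in> gen_ideal n p" "b J \<noteq> 0"
  shows "p \<in> J" and "J - {p} \<subseteq> {1..n}"
proof -
  obtain a where a: "a \<in> gr_alg n" "b = gr_mult (gr_basis {p}) a"
    using assms(1) unfolding gen_ideal_def by blast
  obtain I where "I \<subseteq> J" "gr_basis {p} I * a (J - I) * gr_sign I (J - I) \<noteq> 0"
    using assms(2) sum.not_neutral_contains_not_neutral unfolding a(2) gr_mult_def by blast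
  then have "I = {p}" "a (J - {p}) \<noteq> 0" "p \<in> J"
    by (auto simp: gr_basis_def split: if_splits)
  with a(1) show "p \<in> J" "J - {p} \<subseteq> {1..n}" by (auto simp: gr_alg_def)
qed

lemma gen_ideal_subset_gr_alg:
  assumes "1 \<le> p" "p \<le> n"
  shows "gen_ideal n p \<subseteq> gr_alg n"
proof
  fix b
  assume b: "b \<in> gen_ideal n p"
  have "p \<in> {1..n}" using assms by simp
  then show "b \<in> gr_alg n"
    unfolding gr_alg_def using gen_ideal_coeff[OF b] by blast
qed

lemma ebar_sub_gen_ideal_coeff:
  assumes "y \<in> ebar_sub (gen_ideal n p)" "p \<notin> J"
  shows "fst y J = 0 \<and> snd y J = 0"
  using ebar_sub_coeff[OF assms(1), of J] gen_ideal_coeff(1)[of _ n p J] assms(2) by blast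

theorem mainTheorem3:
  fixes k :: enat
    and U :: "nat \<Rightarrow> ('e0::{real_vector,t2_space}, 'e1::{real_vector,t2_space}) sbar set"
    and f :: "nat \<Rightarrow> ('e0, 'e1) sbar \<Rightarrow> ('f0::{real_vector,t2_space}, 'f1::{real_vector,t2_space}) sbar"
    and n p :: nat
    and x y :: "('e0, 'e1) sbar"
  assumes "locally_convex TYPE('e0)" and "locally_convex TYPE('e1)"
    and "locally_convex TYPE('f0)" and "locally_convex TYPE('f1)"
    and "open_subfunctor k U"
    and "natural_transf k U f"
    and "\<And>m. enat m \<le> k \<Longrightarrow> bastiani_smooth (ebar m) (U m) (f m)"
    and "enat n \<le> k"
    and "1 \<le> p" and "p \<le> n"
    and "x \<in> U n" and "x \<in> ebar_sub (delta_p n p)"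
    and "y \<in> ebar_sub (gen_ideal n p)"
  shows "x + y \<in> U n \<and> f n (x + y) = f n x + dir_deriv (f n) x y"
proof -
  note U = \<open>open_subfunctor k U\<close> \<open>enat n \<le> k\<close>
  have line: "sbar_scale p t (x + s *\<^sub>R y) = x + (t * s) *\<^sub>R y" for s t
    using assms(12,13) by (intro sbar_scale_line ebar_sub_delta_p_coeff ebar_sub_gen_ideal_coeff)
  have "x \<in> ebar n" "y \<in> ebar n"
    using assms(9-13) U ebar_sub_subset_ebar[OF gen_ideal_subset_gr_alg]
    unfolding open_subfunctor_def by auto
  then have "range (\<lambda>s. x + s *\<^sub>R y) \<subseteq> ebar n"
    by (auto intro: ebar_add_scaleR)
  moreover have "openin (top_of_set (ebar n)) (U n)"
    using U unfolding open_subfunctor_def by blast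
  moreover have "x + s *\<^sub>R y \<in> U n \<Longrightarrow> x + (t * s) *\<^sub>R y \<in> U n" for s t
    using open_subfunctor_sbar_scale[OF U] line by metis
  moreover have "x + 0 *\<^sub>R y \<in> U n"
    using assms(11) by simp
  ultimately have "x + 1 *\<^sub>R y \<in> U n"
    by (rule dilation_invariant_open_line[OF continuous_on_line_sbar[OF assms(1,2)]])
  then have xy: "x + y \<in> U n" by simp
  define w where "w = f n (x + y)"
  have affine: "f n (x + t *\<^sub>R y) = sbar_scale p 0 w + t *\<^sub>R (w - sbar_scale p 0 w)" for t
    using natural_transf_sbar_scale[OF assms(6) U xy, of p t] line[of t 1]
    by (simp add: w_def sbar_scale_affine[symmetric])
  show ?thesis
    using xy affine[of 0] affine[of 1] dir_deriv_affine_line[OF affine] by simp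
qed

end
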